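(* Let $X$ be a hyperbolic Riemann surface of finite type with base point $\star$, $G=\pi_1(X,\star)$, and $\rho:G\to\mathrm{PSL}(2,\mathbb C)$ a parabolic representation, with a smooth normalized Lipschitz family of spherical metrics on the fibers of $M_\rho$ with Lipschitz constant $C_\rho$. Then there exists a constant $\beta_\rho$ depending only on $C_\rho$ such that $\|\rho(g)\|\le\|\rho_{\rm can}(g)\|^{\beta_\rho}$ for all $g\in G$.
   Context: $X$ is a compact Riemann surface of genus $g$ minus $n$ points, $2-2g-n<0$, with its hyperbolic metric of curvature $-1$; $\rho_{\rm can}:G\to\mathrm{PSL}(2,\mathbb R)$ is the uniformizing representation obtained by identifying the universal cover with $\mathbb H^2$, $\star\mapsto 0$. Parabolic: loops around punctures map to parabolic elements. $\|\gamma\|$ is the operator norm of an $\mathrm{SL}(2,\mathbb C)$ representative. The suspension $M_\rho=(\mathbb H^2\times\mathbb P^1)/G$ with diagonal action $(\rho_{\rm can},\rho)$; holonomy $h_\rho(\omega)$ of the horizontal foliation along a path $\omega$; $\|h_\rho(\omega)\|=\sup_x\|d_xh_\rho(\omega)\|$ for the fiber metrics. Normalized: the fiber over $\star$ is isometric to $\mathbb P^1$ with its standard Fubini–Study metric via the natural map. Lipschitz with constant $C_\rho$: $\log\|h_\rho(\omega)\|\le C_\rho\,\mathrm{length}(\omega)$ for all smooth paths $\omega$ on $X$. *)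

theory Defs
  imports "HOL-Analysis.Analysis"
begin

type_synonym cmat = "complex^2^2"

definition psl_eq :: "cmat \<Rightarrow> cmat \<Rightarrow> bool" where
  "psl_eq A B \<longleftrightarrow> A = B \<or> A = - B"

definition mtrace :: "cmat \<Rightarrow> complex" where
  "mtrace A = A$1$1 + A$2$2"

definition mpow :: "cmat \<Rightarrow> nat \<Rightarrow> cmat" where
  "mpow A n = (((**) A) ^^ n) (mat 1)"

text \<open>Parabolic element of PSL(2,C) (represented in SL(2,C)).\<close>
definition parabolic :: "cmat \<Rightarrow> bool" where
  "parabolic A \<longleftrightarrow> (mtrace A = 2 \<or> mtrace A = -2) \<and> \<not> psl_eq A (mat 1)"

definition opnorm :: "cmat \<Rightarrow> real" where
  "opnorm A = onorm (\<lambda>v::complex^2. A *v v)"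

text \<open>Moebius action of a matrix on the affine chart C of P^1 (and on the disk).\<close>
definition mob :: "cmat \<Rightarrow> complex \<Rightarrow> complex" where
  "mob M w = (M$1$1 * w + M$1$2) / (M$2$1 * w + M$2$2)"

text \<open>SU(1,1): the matrices acting isometrically on the Poincare disk (the disk model
  of H^2, with base point 0).\<close>
definition SU11 :: "cmat set" where
  "SU11 = {A. A$2$1 = cnj (A$1$2) \<and> A$2$2 = cnj (A$1$1) \<and>
              (cmod (A$1$1))^2 - (cmod (A$1$2))^2 = 1}"

abbreviation disk :: "complex set" where "disk \<equiv> ball 0 1"

text \<open>Density of the hyperbolic metric 2|dz|/(1-|z|^2) (curvature -1) on the disk.\<close>
definition hyp_density :: "complex \<Rightarrow> real" where
  "hyp_density z = 2 / (1 - (cmod z)^2)"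

text \<open>Fubini-Study (round, curvature 1) density 2|dw|/(1+|w|^2) on the chart C of P^1.\<close>
definition fs_density :: "complex \<Rightarrow> real" where
  "fs_density w = 2 / (1 + (cmod w)^2)"

text \<open>Density of the pullback of the Fubini-Study metric under the Moebius map of M
  (det M = 1), written out in the chart C: |M'(w)| * fs(M w), extended continuously
  through the pole of M.\<close>
definition sph_density :: "cmat \<Rightarrow> complex \<Rightarrow> real" where
  "sph_density M w = 2 / ((cmod (M$1$1 * w + M$1$2))^2 + (cmod (M$2$1 * w + M$2$2))^2)"

text \<open>C-infinity smoothness on an open set: continuous, and all directional derivatives
  exist and are again smooth (greatest fixed point).\<close>
coinductive smooth_on :: "'a::real_normed_vector set \<Rightarrow> ('a \<Rightarrow> 'b::real_normed_vector) \<Rightarrow> bool"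
  where "continuous_on S f \<Longrightarrow>
         (\<And>v. \<exists>g. (\<forall>x\<in>S. ((\<lambda>t::real. f (x + t *\<^sub>R v)) has_vector_derivative g x) (at 0))
                  \<and> smooth_on S g)
         \<Longrightarrow> smooth_on S f"

definition smooth_disk_path :: "(real \<Rightarrow> complex) \<Rightarrow> bool" where
  "smooth_disk_path c \<longleftrightarrow> (\<exists>T. open T \<and> {0..1} \<subseteq> T \<and> smooth_on T c) \<and> c ` {0..1} \<subseteq> disk"

definition hyp_length :: "(real \<Rightarrow> complex) \<Rightarrow> real" where
  "hyp_length c = integral {0..1} (\<lambda>t. hyp_density (c t) * norm (vector_derivative c (at t)))"

text \<open>Gamma = rho_can(G): a discrete, torsion-free subgroup of PSU(1,1) (closed under
  sign) whose quotient of the disk has finite hyperbolic area, i.e. the uniformizing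
  group of a hyperbolic Riemann surface of finite type.\<close>
definition finite_type_fuchsian :: "cmat set \<Rightarrow> bool" where
  "finite_type_fuchsian \<Gamma> \<longleftrightarrow>
     \<Gamma> \<subseteq> SU11 \<and> mat 1 \<in> \<Gamma> \<and>
     (\<forall>A\<in>\<Gamma>. \<forall>B\<in>\<Gamma>. A ** B \<in> \<Gamma>) \<and>
     (\<forall>A\<in>\<Gamma>. matrix_inv A \<in> \<Gamma> \<and> - A \<in> \<Gamma>) \<and>
     (\<forall>A\<in>\<Gamma>. \<exists>e>0. \<forall>B\<in>\<Gamma>. dist B A < e \<longrightarrow> B = A) \<and>
     (\<forall>A\<in>\<Gamma>. \<forall>n>0. psl_eq (mpow A n) (mat 1) \<longrightarrow> psl_eq A (mat 1)) \<and>
     (\<exists>F. F \<in> sets lebesgue \<and> F \<subseteq> disk \<and> (\<Union>A\<in>\<Gamma>. mob A ` F) = disk \<and>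
          (\<integral>\<^sup>+ z. ennreal (indicator F z * (hyp_density z)^2) \<partial>lebesgue) < \<infinity>)"

text \<open>A representation Gamma -> PSL(2,C), given by SL(2,C) representatives, which is
  parabolic (parabolic elements, i.e. loops around punctures, go to parabolic elements).\<close>
definition parabolic_rep :: "cmat set \<Rightarrow> (cmat \<Rightarrow> cmat) \<Rightarrow> bool" where
  "parabolic_rep \<Gamma> \<rho> \<longleftrightarrow>
     (\<forall>A\<in>\<Gamma>. det (\<rho> A) = 1) \<and>
     (\<forall>A\<in>\<Gamma>. psl_eq (\<rho> (- A)) (\<rho> A)) \<and>
     (\<forall>A\<in>\<Gamma>. \<forall>B\<in>\<Gamma>. psl_eq (\<rho> (A ** B)) (\<rho> A ** \<rho> B)) \<and>
     (\<forall>A\<in>\<Gamma>. parabolic A \<longrightarrow> parabolic (\<rho> (A)))"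

text \<open>A family of spherical metrics on the fibres of M_rho = (disk x P^1)/Gamma, lifted to
  disk x P^1: sigma z is the density (in the chart C of P^1) of the metric on the fibre
  over z.  Conditions: each is spherical (pullback of Fubini-Study by a Moebius map),
  smooth in (z,w), Gamma-invariant (so it descends to M_rho), normalized at the base
  point 0, and Lipschitz with constant C: the holonomy of the horizontal foliation along
  a path (the identity map of P^1 in this trivialisation, between the fibre metrics at
  the endpoints of a lift) has log-norm at most C times the hyperbolic length.\<close>
definition normalized_lipschitz_family ::
    "cmat set \<Rightarrow> (cmat \<Rightarrow> cmat) \<Rightarrow> (complex \<Rightarrow> complex \<Rightarrow> real) \<Rightarrow> real \<Rightarrow> bool" where
  "normalized_lipschitz_family \<Gamma> \<rho> \<sigma> C \<longleftrightarrow>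
     (\<forall>z\<in>disk. \<exists>M. det M = 1 \<and> (\<forall>w. \<sigma> z w = sph_density M w)) \<and>
     smooth_on (disk \<times> UNIV) (\<lambda>(z, w). \<sigma> z w) \<and>
     (\<forall>A\<in>\<Gamma>. \<forall>z\<in>disk. \<forall>w. (\<rho> A)$2$1 * w + (\<rho> A)$2$2 \<noteq> 0 \<longrightarrow>
        \<sigma> (mob A z) (mob (\<rho> A) w) * cmod (deriv (mob (\<rho> A)) w) = \<sigma> z w) \<and>
     (\<forall>w. \<sigma> 0 w = fs_density w) \<and>
     (\<forall>c. smooth_disk_path c \<longrightarrow>
        ln (SUP w. \<sigma> (c 1) w / \<sigma> (c 0) w) \<le> C * hyp_length c)"

end

theory Submission
  imports Defs
begin

text \<open>Write A = [[a, b], [cnj b, cnj a]] \<in> SU(1,1) and p = A 0.  The fibre metric over p is the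
  pullback of the Fubini-Study metric by some Moebius map, and \<Gamma>-invariance gives
  \<sigma>(p)(\<rho>(A) w) |\<rho>(A)'(w)| = fs(w).  Comparing the two densities in homogeneous coordinates
  shows that ||\<rho>(A)||^2 is at most sup (\<sigma>(p) / fs), which is the norm of the holonomy along
  the radial segment from 0 to p.  By the Lipschitz condition its logarithm is at most C times
  the hyperbolic length 2 ln (|a| + |b|) of that segment, and |a| + |b| \<le> ||A||.\<close>

definition hcoord :: "complex \<Rightarrow> complex^2" where
  "hcoord w = vector [w, 1]"

lemma norm_sq_C2: "(norm (v::complex^2))^2 = (cmod (v$1))^2 + (cmod (v$2))^2"
  by (simp add: norm_vec_def L2_set_def sum_2)

lemma matrix_vector_mult_C2:
  "((M::cmat) *v v)$1 = M$1$1 * v$1 + M$1$2 * v$2"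
  "((M::cmat) *v v)$2 = M$2$1 * v$1 + M$2$2 * v$2"
  by (simp_all add: matrix_vector_mult_def sum_2)

lemma hcoord_components [simp]: "hcoord w $ 1 = w" "hcoord w $ 2 = 1"
  by (simp_all add: hcoord_def)

lemma sph_density_eq: "sph_density M w = 2 / (norm (M *v hcoord w))^2"
  by (simp add: sph_density_def norm_sq_C2 matrix_vector_mult_C2)

lemma fs_density_eq: "fs_density w = 2 / (norm (hcoord w))^2"
  by (simp add: fs_density_def norm_sq_C2 add.commute)

lemma matrix_vector_mult_hcoord:
  assumes "(M *v hcoord w)$2 \<noteq> 0"
  shows "M *v hcoord w = (M *v hcoord w)$2 *s hcoord (mob M w)"
proof -
  have "(M *v hcoord w)$2 * mob M w = (M *v hcoord w)$1"
    using assms by (simp add: mob_def matrix_vector_mult_C2)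
  then show ?thesis by (simp add: vec_eq_iff forall_2)
qed

lemma norm_smult_C2: "norm ((c::complex) *s (v::complex^2)) = cmod c * norm v"
proof -
  have "(norm (c *s v))^2 = (cmod c * norm v)^2"
    by (simp add: norm_sq_C2 norm_mult power_mult_distrib algebra_simps)
  then show ?thesis by (simp add: power2_eq_iff_nonneg)
qed

lemma cmod_diff_mult_sq_le:
  "(cmod (x * p - y * q))^2 \<le> ((cmod x)^2 + (cmod y)^2) * ((cmod p)^2 + (cmod q)^2)"
proof -
  have "cmod (x * p - y * q) \<le> cmod x * cmod p + cmod y * cmod q"
    by (metis norm_mult norm_triangle_ineq4)
  then have "(cmod (x * p - y * q))^2 \<le> (cmod x * cmod p + cmod y * cmod q)^2"
    by (simp add: power_mono)
  also have "\<dots> \<le> ((cmod x)^2 + (cmod y)^2) * ((cmod p)^2 + (cmod q)^2)"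
  proof -
    have "0 \<le> (cmod x * cmod q - cmod y * cmod p)^2" by simp
    then show ?thesis by (simp add: power2_eq_square algebra_simps)
  qed
  finally show ?thesis .
qed

text \<open>Since det M = 1, the inverse of M is its adjugate, whose entries are those of M up to sign.\<close>

lemma norm_le_frobenius_mult_norm_mv:
  assumes "det (M::cmat) = 1"
  shows "(norm v)^2 \<le> (\<Sum>i\<in>UNIV. \<Sum>j\<in>UNIV. (cmod (M$i$j))^2) * (norm (M *v v))^2"
proof -
  define P Q where "P = (M *v v)$1" and "Q = (M *v v)$2"
  have d: "M$1$1 * M$2$2 - M$1$2 * M$2$1 = 1" using assms by (simp add: det_2)
  have "v$1 = M$2$2 * P - M$1$2 * Q" and "v$2 = M$1$1 * Q - M$2$1 * P"
    unfolding P_def Q_def matrix_vector_mult_C2 using d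
    by (simp_all add: algebra_simps)
  then have "(cmod (v$1))^2 \<le> ((cmod (M$2$2))^2 + (cmod (M$1$2))^2) * ((cmod P)^2 + (cmod Q)^2)"
    and "(cmod (v$2))^2 \<le> ((cmod (M$1$1))^2 + (cmod (M$2$1))^2) * ((cmod Q)^2 + (cmod P)^2)"
    by (simp_all only: cmod_diff_mult_sq_le)
  then show ?thesis unfolding norm_sq_C2 P_def[symmetric] Q_def[symmetric]
    by (simp add: sum_2 algebra_simps)
qed

lemma cmod_deriv_mob:
  assumes "det (R::cmat) = 1" "(R *v hcoord w)$2 \<noteq> 0"
  shows "cmod (deriv (mob R) w) = 1 / (cmod ((R *v hcoord w)$2))^2"
proof -
  define Q where "Q = R$2$1 * w + R$2$2"
  have Q: "Q \<noteq> 0" using assms(2) by (simp add: Q_def matrix_vector_mult_C2)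
  have "(mob R has_field_derivative (R$1$1 * Q - (R$1$1 * w + R$1$2) * R$2$1) / Q^2) (at w)"
    unfolding mob_def Q_def using Q[unfolded Q_def]
    by (auto intro!: derivative_eq_intros simp: power2_eq_square)
  moreover have "R$1$1 * Q - (R$1$1 * w + R$1$2) * R$2$1 = 1"
    using assms(1) by (simp add: Q_def det_2 algebra_simps)
  ultimately have "deriv (mob R) w = 1 / Q^2" using DERIV_imp_deriv by fastforce
  then show ?thesis by (simp add: Q_def matrix_vector_mult_C2 norm_divide norm_power)
qed

lemma invariant_density_ratio:
  assumes "det (R::cmat) = 1" and Q: "(R *v hcoord w)$2 \<noteq> 0"
    and inv: "\<tau> (mob R w) * cmod (deriv (mob R) w) = fs_density w"
  shows "\<tau> (mob R w) / fs_density (mob R w) = (norm (R *v hcoord w))^2 / (norm (hcoord w))^2"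
proof -
  define q where "q = cmod ((R *v hcoord w)$2)"
  have q: "q > 0" using Q by (simp add: q_def)
  have "\<tau> (mob R w) = fs_density w * q^2"
    using inv cmod_deriv_mob[OF assms(1,2)] q by (simp add: q_def field_simps)
  moreover have "norm (R *v hcoord w) = q * norm (hcoord (mob R w))"
    using matrix_vector_mult_hcoord[OF Q] by (metis norm_smult_C2 q_def)
  ultimately show ?thesis using q by (simp add: fs_density_eq power_mult_distrib)
qed

lemma bdd_above_sph_density_ratio:
  assumes "det (M::cmat) = 1"
  shows "bdd_above (range (\<lambda>u. sph_density M u / fs_density u))"
proof (rule bdd_aboveI2)
  fix u
  define K where "K = (\<Sum>i\<in>UNIV. \<Sum>j\<in>UNIV. (cmod (M$i$j))^2)"
  have h: "1 \<le> (norm (hcoord u))^2" by (simp add: norm_sq_C2)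
  have K: "(norm (hcoord u))^2 \<le> K * (norm (M *v hcoord u))^2"
    unfolding K_def by (rule norm_le_frobenius_mult_norm_mv[OF assms])
  then have "0 < K * (norm (M *v hcoord u))^2" using h by linarith
  then have n: "(norm (M *v hcoord u))^2 > 0" by (auto simp: zero_less_mult_iff)
  have "sph_density M u / fs_density u = (norm (hcoord u))^2 / (norm (M *v hcoord u))^2"
    by (simp add: sph_density_eq fs_density_eq)
  also have "\<dots> \<le> K" using K n by (simp add: divide_le_eq)
  finally show "sph_density M u / fs_density u \<le> K" .
qed

lemma eventually_at_right_line_nonzero:
  assumes "b \<noteq> 0"
  shows "\<forall>\<^sub>F t in at_right 0. a + of_real t * b \<noteq> (0::complex)"
  using eventually_neq_at_within[of "Re (- a / b)" 0 "{0<..}"]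
proof eventually_elim
  case (elim t)
  show ?case
  proof
    assume "a + of_real t * b = 0"
    then have "of_real t = - a / b" using assms by (simp add: field_simps add_eq_0_iff)
    then show False using elim by (metis Re_complex_of_real)
  qed
qed

text \<open>Perturb v along a vector x at which both conditions hold and let the perturbation tend to 0.\<close>

lemma sq_norm_mv_le_of_generic:
  assumes "det (R::cmat) \<noteq> 0"
    and bound: "\<And>v. v$2 \<noteq> 0 \<Longrightarrow> (R *v v)$2 \<noteq> 0 \<Longrightarrow> (norm (R *v v))^2 \<le> S * (norm v)^2"
  shows "(norm (R *v v))^2 \<le> S * (norm v)^2"
proof -
  obtain x where x2: "x$2 \<noteq> 0" and Rx2: "(R *v x)$2 \<noteq> 0"
  proof (cases "R$2$2 = 0")
    case True
    then have "R$2$1 \<noteq> 0" using assms by (auto simp: det_2)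
    then show ?thesis using that[of "vector [1, 1]"] True by (simp add: matrix_vector_mult_C2)
  next
    case False
    then show ?thesis using that[of "vector [0, 1]"] by (simp add: matrix_vector_mult_C2)
  qed
  define g where "g t = S * (norm (v + t *\<^sub>R x))^2 - (norm (R *v (v + t *\<^sub>R x)))^2" for t :: real
  have "\<forall>\<^sub>F t in at_right 0. (v + t *\<^sub>R x)$2 \<noteq> 0 \<and> (R *v (v + t *\<^sub>R x))$2 \<noteq> 0"
    using eventually_at_right_line_nonzero[OF x2, of "v$2"]
      eventually_at_right_line_nonzero[OF Rx2, of "(R *v v)$2"]
    by eventually_elim (simp add: matrix_vector_mult_C2 algebra_simps, simp add: scaleR_conv_of_real)
  then have "\<forall>\<^sub>F t in at_right 0. 0 \<le> g t"
    by eventually_elim (use bound in \<open>simp add: g_def\<close>)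
  moreover have "continuous_on UNIV g"
    unfolding g_def by (intro continuous_intros continuous_on_compose2[OF matrix_vector_mult_linear_continuous_on]) auto
  then have "(g \<longlongrightarrow> g 0) (at_right 0)"
    by (metis UNIV_I continuous_on_def filterlim_at_split)
  ultimately have "0 \<le> g 0" by (intro tendsto_lowerbound) auto
  then show ?thesis by (simp add: g_def)
qed

lemma opnorm_nonneg: "0 \<le> opnorm M"
  unfolding opnorm_def by (rule onorm_pos_le[OF matrix_vector_mul_bounded_linear])

lemma opnorm_sq_le:
  assumes "\<And>v. (norm ((R::cmat) *v v))^2 \<le> S * (norm v)^2"
  shows "(opnorm R)^2 \<le> S"
proof -
  have "norm (R *v v) \<le> sqrt S * norm v" for v
    using real_sqrt_le_mono[OF assms[of v]] by (simp add: real_sqrt_mult)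
  then have "opnorm R \<le> sqrt S" unfolding opnorm_def by (rule onorm_le)
  moreover have "(norm (R *v hcoord 0))^2 \<le> S" using assms[of "hcoord 0"] by (simp add: norm_sq_C2)
  then have "0 \<le> S" by (meson order_trans zero_le_power2)
  ultimately show ?thesis using opnorm_nonneg by (metis power_mono real_sqrt_pow2)
qed

lemma opnorm_sq_le_of_hcoord:
  assumes "det (R::cmat) \<noteq> 0"
    and bound: "\<And>w. (R *v hcoord w)$2 \<noteq> 0 \<Longrightarrow> (norm (R *v hcoord w))^2 \<le> S * (norm (hcoord w))^2"
  shows "(opnorm R)^2 \<le> S"
proof (rule opnorm_sq_le, rule sq_norm_mv_le_of_generic[OF assms(1)])
  fix v :: "complex^2"
  assume v2: "v$2 \<noteq> 0" and Rv2: "(R *v v)$2 \<noteq> 0"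
  define w where "w = v$1 / v$2"
  have vw: "v$1 = v$2 * w" using v2 by (simp add: w_def)
  have Rv: "R *v v = v$2 *s (R *v hcoord w)"
    by (simp add: vec_eq_iff forall_2 matrix_vector_mult_C2 vw algebra_simps)
  then have "(R *v hcoord w)$2 \<noteq> 0" using Rv2 by simp
  from bound[OF this] have "(cmod (v$2))^2 * (norm (R *v hcoord w))^2 \<le> (cmod (v$2))^2 * (S * (norm (hcoord w))^2)"
    by (rule mult_left_mono) simp
  moreover have "(norm v)^2 = (cmod (v$2))^2 * (norm (hcoord w))^2"
    by (simp add: norm_sq_C2 vw norm_mult power_mult_distrib algebra_simps)
  ultimately show "(norm (R *v v))^2 \<le> S * (norm v)^2"
    by (simp add: Rv norm_smult_C2 power_mult_distrib mult.left_commute)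
qed

lemma opnorm_sq_le_SUP_sph_density_ratio:
  assumes "det (R::cmat) = 1" "det (M::cmat) = 1"
    and inv: "\<And>w. (R *v hcoord w)$2 \<noteq> 0 \<Longrightarrow> sph_density M (mob R w) * cmod (deriv (mob R) w) = fs_density w"
  shows "(opnorm R)^2 \<le> (SUP u. sph_density M u / fs_density u)"
proof (rule opnorm_sq_le_of_hcoord)
  fix w
  assume Q: "(R *v hcoord w)$2 \<noteq> 0"
  have "(norm (R *v hcoord w))^2 / (norm (hcoord w))^2 = sph_density M (mob R w) / fs_density (mob R w)"
    using invariant_density_ratio[OF assms(1) Q, of "sph_density M"] inv[OF Q] by simp
  also have "\<dots> \<le> (SUP u. sph_density M u / fs_density u)"
    by (rule cSUP_upper[OF UNIV_I bdd_above_sph_density_ratio[OF assms(2)]])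
  finally show "(norm (R *v hcoord w))^2 \<le> (SUP u. sph_density M u / fs_density u) * (norm (hcoord w))^2"
    by (rule pos_divide_le_eq[THEN iffD1, rotated]) (simp add: norm_sq_C2 add_nonneg_pos)
qed (use assms in simp)

lemma mult_cnj_sgn: "z * cnj (sgn z) = complex_of_real (cmod z)"
proof (cases "z = 0")
  case False
  have "z * cnj z = complex_of_real (cmod z) * complex_of_real (cmod z)"
    by (metis complex_norm_square of_real_mult power2_eq_square)
  then show ?thesis using False by (simp add: sgn_eq)
qed simp

lemma opnorm_SU11_ge:
  assumes "A \<in> SU11"
  shows "cmod (A$1$1) + cmod (A$1$2) \<le> opnorm A"
proof -
  define a b where "a = A$1$1" and "b = A$1$2"
  have A2: "A$2$1 = cnj b" "A$2$2 = cnj a" using assms by (simp_all add: SU11_def a_def b_def)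
  have "(cmod a)^2 = 1 + (cmod b)^2" using assms by (simp add: SU11_def a_def b_def)
  then have "a \<noteq> 0" by (auto simp: add_nonneg_eq_0_iff)
  txt \<open>This test vector aligns the phases in both rows of A.\<close>
  define v where "v = (vector [cnj (sgn a), cnj (sgn b)] :: complex^2)"
  have "(A *v v)$1 = of_real (cmod a + cmod b)"
    by (simp add: v_def matrix_vector_mult_C2 mult_cnj_sgn flip: a_def b_def)
  moreover have "(A *v v)$2 = cnj (sgn a * sgn b * of_real (cmod a + cmod b))"
  proof -
    have "b * sgn a + a * sgn b = sgn a * sgn b * of_real (cmod a + cmod b)"
      by (cases "a = 0"; cases "b = 0") (simp_all add: sgn_eq field_simps)
    from arg_cong[where f = cnj, OF this] show ?thesis
      by (simp add: v_def matrix_vector_mult_C2 A2 mult.commute flip: a_def b_def)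
  qed
  ultimately have "(norm (A *v v))^2 = (cmod a + cmod b)^2 * (1 + (cmod (sgn b))^2)"
    using \<open>a \<noteq> 0\<close> by (simp add: norm_sq_C2 norm_mult norm_sgn power_mult_distrib del: of_real_add)
  moreover have "(norm v)^2 = 1 + (cmod (sgn b))^2"
    using \<open>a \<noteq> 0\<close> by (simp add: norm_sq_C2 v_def norm_sgn)
  ultimately have "(norm (A *v v))^2 = ((cmod a + cmod b) * norm v)^2"
    by (simp add: power_mult_distrib)
  then have "norm (A *v v) = (cmod a + cmod b) * norm v"
    by simp
  moreover have "norm (A *v v) \<le> opnorm A * norm v"
    unfolding opnorm_def by (rule onorm[OF matrix_vector_mul_bounded_linear])
  moreover have "norm v > 0" using \<open>a \<noteq> 0\<close> by (auto simp: v_def vec_eq_iff forall_2 sgn_zero_iff)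
  ultimately show ?thesis by (simp add: a_def b_def)
qed

lemma smooth_on_affine: "smooth_on UNIV (\<lambda>t::real. t *\<^sub>R (p::'a::real_normed_vector) + q)"
proof -
  have "\<exists>p q. f = (\<lambda>t::real. t *\<^sub>R (p::'a) + q) \<Longrightarrow> smooth_on UNIV f" for f
  proof (coinduction arbitrary: f rule: smooth_on.coinduct)
    case (smooth_on f)
    then obtain p q where f: "f = (\<lambda>t::real. t *\<^sub>R (p::'a) + q)" by blast
    show ?case
    proof (intro exI conjI allI)
      show "continuous_on UNIV f" unfolding f by (intro continuous_intros)
      fix v :: real
      show "\<forall>x\<in>UNIV. ((\<lambda>t. f (x + t *\<^sub>R v)) has_vector_derivative (\<lambda>t. t *\<^sub>R 0 + v *\<^sub>R p) x) (at 0)"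
        unfolding f by (auto intro!: derivative_eq_intros simp: algebra_simps)
    qed (auto, rule exI[of _ 0], auto)
  qed
  then show ?thesis by blast
qed

lemma smooth_disk_path_segment:
  assumes "cmod p < 1"
  shows "smooth_disk_path (\<lambda>t. t *\<^sub>R p)"
  unfolding smooth_disk_path_def
proof
  show "\<exists>T. open T \<and> {0..1} \<subseteq> T \<and> smooth_on T (\<lambda>t. t *\<^sub>R p)"
    using smooth_on_affine[of p 0] by (intro exI[of _ UNIV]) auto
  have "cmod (t *\<^sub>R p) < 1" if "t \<in> {0..1}" for t
    using that assms mult_left_le_one_le[of "cmod p" t] by simp
  then show "(\<lambda>t. t *\<^sub>R p) ` {0..1} \<subseteq> disk" by auto
qed

lemma hyp_length_segment:
  assumes "cmod p < 1"
  shows "hyp_length (\<lambda>t. t *\<^sub>R p) = ln ((1 + cmod p) / (1 - cmod p))"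
proof -
  define r where "r = cmod p"
  have r: "0 \<le> r" "r < 1" using assms by (simp_all add: r_def)
  have "vector_derivative (\<lambda>t. t *\<^sub>R p) (at t) = p" for t
    by (rule vector_derivative_at) (auto intro!: derivative_eq_intros)
  then have integrand: "hyp_density (t *\<^sub>R p) * norm (vector_derivative (\<lambda>t. t *\<^sub>R p) (at t))
      = 2 * r / (1 - (t * r)^2)" for t
    by (simp add: hyp_density_def power_mult_distrib r_def)
  have "((\<lambda>t. 2 * r / (1 - (t * r)^2)) has_integral
      (ln (1 + 1 * r) - ln (1 - 1 * r)) - (ln (1 + 0 * r) - ln (1 - 0 * r))) {0..1}"
  proof (rule fundamental_theorem_of_calculus)
    fix t :: real assume t: "t \<in> {0..1}"
    then have "0 \<le> t * r" "t * r \<le> r" using r mult_left_le_one_le[of r t] by auto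
    then have pos: "1 - t * r > 0" "1 + t * r > 0" using r by auto
    then have "((\<lambda>t. ln (1 + t * r) - ln (1 - t * r)) has_real_derivative
        r / (1 + t * r) + r / (1 - t * r)) (at t within {0..1})"
      by (auto intro!: derivative_eq_intros)
    moreover have "r / (1 + t * r) + r / (1 - t * r) = 2 * r / (1 - (t * r)^2)"
      using pos by (simp add: field_simps power2_eq_square)
    ultimately show "((\<lambda>t. ln (1 + t * r) - ln (1 - t * r)) has_vector_derivative
        2 * r / (1 - (t * r)^2)) (at t within {0..1})"
      by (simp add: has_real_derivative_iff_has_vector_derivative)
  qed simp
  then have "hyp_length (\<lambda>t. t *\<^sub>R p) = ln (1 + r) - ln (1 - r)"
    unfolding hyp_length_def integrand by (simp add: integral_unique)
  also have "\<dots> = ln ((1 + r) / (1 - r))" using r by (simp add: ln_div)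
  finally show ?thesis by (simp add: r_def)
qed

lemma SU11_orbit_of_zero:
  assumes "A \<in> SU11"
  defines "s \<equiv> cmod (A$1$1) + cmod (A$1$2)"
  shows "1 \<le> s" and "cmod (mob A 0) < 1" and "hyp_length (\<lambda>t. t *\<^sub>R mob A 0) = 2 * ln s"
proof -
  define a b where "a = cmod (A$1$1)" and "b = cmod (A$1$2)"
  have s: "s = a + b" by (simp add: s_def a_def b_def)
  have "a^2 = 1 + b^2" using assms by (simp add: SU11_def a_def b_def)
  moreover have "0 \<le> a" "0 \<le> b" by (simp_all add: a_def b_def)
  ultimately have "1 \<le> a" and ab: "(a - b) * s = 1"
    using power2_le_imp_le[of 1 a] by (auto simp: s power2_eq_square algebra_simps)
  show "1 \<le> s" using \<open>1 \<le> a\<close> \<open>0 \<le> b\<close> s by simp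
  then have "0 < s" by simp
  then have "a - b = 1 / s" using ab by (simp add: field_simps)
  then have "0 < a - b" using \<open>0 < s\<close> by simp
  have r: "cmod (mob A 0) = b / a"
    using assms by (simp add: mob_def SU11_def norm_divide a_def b_def)
  show "cmod (mob A 0) < 1" using r \<open>0 < a - b\<close> \<open>1 \<le> a\<close> by simp
  have "(1 + b / a) / (1 - b / a) = s / (a - b)"
    using \<open>1 \<le> a\<close> \<open>0 < a - b\<close> by (simp add: s field_simps)
  also have "\<dots> = s^2" using ab \<open>0 < a - b\<close> by (simp add: field_simps power2_eq_square)
  finally show "hyp_length (\<lambda>t. t *\<^sub>R mob A 0) = 2 * ln s"
    using hyp_length_segment[of "mob A 0"] r \<open>cmod (mob A 0) < 1\<close> \<open>0 < s\<close> by (simp add: ln_realpow)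
qed

lemma le_powr_of_ln_le:
  fixes x y :: real
  assumes "0 \<le> x" "0 < y" "x^2 \<le> S" "ln S \<le> 2 * c * ln y"
  shows "x \<le> y powr c"
proof (cases "x = 0")
  case False
  then have "2 * ln x = ln (x^2)" using assms(1) by (simp add: ln_realpow)
  also have "\<dots> \<le> ln S"
    using False assms(3) by (intro ln_mono) auto
  finally have "exp (ln x) \<le> exp (c * ln y)" using assms(4) by simp
  then show ?thesis using False assms(1,2) by (simp add: powr_def)
qed (simp add: assms(2))

theorem corollary2p3:
  shows "\<exists>\<beta>::real \<Rightarrow> real. \<forall>\<Gamma> \<rho> \<sigma> C.
           finite_type_fuchsian \<Gamma> \<and> parabolic_rep \<Gamma> \<rho> \<and>
           normalized_lipschitz_family \<Gamma> \<rho> \<sigma> C \<longrightarrow>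
           (\<forall>A\<in>\<Gamma>. opnorm (\<rho> A) \<le> opnorm A powr \<beta> C)"
proof (intro exI[of _ "\<lambda>C. max C 0"] allI impI ballI)
  fix \<Gamma> \<rho> \<sigma> C A
  assume "finite_type_fuchsian \<Gamma> \<and> parabolic_rep \<Gamma> \<rho> \<and> normalized_lipschitz_family \<Gamma> \<rho> \<sigma> C"
    and "A \<in> \<Gamma>"
  then have A: "A \<in> SU11" and R: "det (\<rho> A) = 1"
    and spherical: "\<forall>z\<in>disk. \<exists>M. det M = 1 \<and> (\<forall>w. \<sigma> z w = sph_density M w)"
    and invariant: "\<forall>w. (\<rho> A)$2$1 * w + (\<rho> A)$2$2 \<noteq> 0 \<longrightarrow>
        \<sigma> (mob A 0) (mob (\<rho> A) w) * cmod (deriv (mob (\<rho> A)) w) = \<sigma> 0 w"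
    and normalized: "\<forall>w. \<sigma> 0 w = fs_density w"
    and lipschitz: "\<forall>c. smooth_disk_path c \<longrightarrow> ln (SUP w. \<sigma> (c 1) w / \<sigma> (c 0) w) \<le> C * hyp_length c"
    by (auto simp: finite_type_fuchsian_def parabolic_rep_def normalized_lipschitz_family_def)
  define s where "s = cmod (A$1$1) + cmod (A$1$2)"
  note orbit = SU11_orbit_of_zero[OF A, folded s_def]
  have s: "1 \<le> s" "s \<le> opnorm A" using orbit(1) opnorm_SU11_ge[OF A] by (simp_all add: s_def)
  obtain M where M: "det M = 1" "\<sigma> (mob A 0) = sph_density M"
    using spherical orbit(2) by fastforce
  define S where "S = (SUP u. sph_density M u / fs_density u)"
  have "(opnorm (\<rho> A))^2 \<le> S"
    using invariant normalized M unfolding S_def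
    by (intro opnorm_sq_le_SUP_sph_density_ratio[OF R M(1)]) (simp add: matrix_vector_mult_C2)
  moreover have "ln S \<le> C * (2 * ln s)"
    using lipschitz[rule_format, OF smooth_disk_path_segment[OF orbit(2)]] orbit(3) normalized M(2)
    by (simp add: S_def)
  moreover have "C * (2 * ln s) \<le> 2 * max C 0 * ln (opnorm A)"
    using s by (simp add: mult_mono mult_left_mono mult.left_commute max_def)
  ultimately show "opnorm (\<rho> A) \<le> opnorm A powr max C 0"
    using s opnorm_nonneg by (intro le_powr_of_ln_le[where S = S]) auto
qed

end
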